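(* The compact subsets of the Sorgenfrey line $\mathbb R_\ell$ are exactly the well-founded subdcpos of $(\mathbb R,\ge)$. They are all countable.
   Context: The Sorgenfrey line $\mathbb R_\ell$ is $\mathbb R$ with the topology generated by the half-open intervals $[a,b[$, $a<b$. A subset $Q\subseteq\mathbb R$ is a chain in $(\mathbb R,\ge)$ automatically; it is a subdcpo of $(\mathbb R,\ge)$ if for every non-empty subset $D\subseteq Q$, the supremum of $D$ in $(\mathbb R,\ge)$ (i.e. $\inf D$ in the usual order) exists in $\mathbb R$ and belongs to $Q$. It is well-founded in $(\mathbb R,\ge)$ if it contains no infinite strictly increasing sequence $r_0<r_1<\cdots$ (in the usual order). *)

theory Defs
  imports "HOL-Analysis.Analysis"
begin

definition sorgenfrey :: "real topology" where
  "sorgenfrey = topology_generated_by {{a..<b} | a b. a < b}"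

text \<open>Q is a subdcpo of (R, \<ge>): every non-empty subset D of Q has a supremum
in (R, \<ge>), i.e. an infimum in the usual order (D bounded below), and it lies in Q.\<close>
definition ge_subdcpo :: "real set \<Rightarrow> bool" where
  "ge_subdcpo Q \<longleftrightarrow> (\<forall>D. D \<noteq> {} \<and> D \<subseteq> Q \<longrightarrow> bdd_below D \<and> Inf D \<in> Q)"

text \<open>Q is well-founded in (R, \<ge>): no infinite strictly increasing sequence
(in the usual order) in Q.\<close>
definition ge_wellfounded :: "real set \<Rightarrow> bool" where
  "ge_wellfounded Q \<longleftrightarrow> \<not> (\<exists>r::nat \<Rightarrow> real. (\<forall>n. r n \<in> Q) \<and> (\<forall>n. r n < r (Suc n)))"

end

theory Submission
  imports Defs
begin

text \<open>Covering a compact set Q by directed families of Sorgenfrey-open sets shows that Q is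
bounded, that every real s has a gap [t, s[ free of Q to its left, and that every s \<notin> Q has
such a gap [s, t[ to its right. The left gaps exclude strictly increasing sequences in Q and,
after choosing a rational in each gap, inject Q into the rationals; the right gaps force
infima of subsets of Q back into Q. Conversely, for a well-founded subdcpo Q one shows by
well-founded induction from the right that every tail Q \<inter> [q, \<infinity>[ has a finite subcover:
a basic neighbourhood [q, q + e[ covers its beginning, and the rest is the tail starting at
the infimum of Q \<inter> [q + e, \<infinity>[, which lies in Q.\<close>

lemma openin_sorgenfrey:
  "openin sorgenfrey U \<longleftrightarrow> (\<forall>x\<in>U. \<exists>e>0. {x..<x+e} \<subseteq> U)"
proof
  assume "openin sorgenfrey U"
  then have "generate_topology_on {{a..<b} | a b. a < (b::real)} U"
    unfolding sorgenfrey_def by (rule openin_topology_generated_by)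
  then show "\<forall>x\<in>U. \<exists>e>0. {x..<x+e} \<subseteq> U"
  proof induction
    case Empty
    then show ?case by simp
  next
    case (Int A B)
    show ?case
    proof
      fix x assume "x \<in> A \<inter> B"
      then obtain e1 e2 where "e1 > 0" "{x..<x+e1} \<subseteq> A" "e2 > 0" "{x..<x+e2} \<subseteq> B"
        using Int.IH by (meson IntD1 IntD2)
      moreover have "{x..<x + min e1 e2} \<subseteq> {x..<x+e1} \<inter> {x..<x+e2}" by auto
      ultimately have "min e1 e2 > 0" "{x..<x + min e1 e2} \<subseteq> A \<inter> B" by (simp, blast)
      then show "\<exists>e>0. {x..<x+e} \<subseteq> A \<inter> B" by blast
    qed
  next
    case (UN K)
    then show ?case by blast
  next
    case (Basis S)
    then obtain a b where S: "S = {a..<b}" by blast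
    show ?case
    proof
      fix x assume "x \<in> S"
      then show "\<exists>e>0. {x..<x+e} \<subseteq> S" unfolding S by (intro exI[of _ "b - x"]) auto
    qed
  qed
next
  assume nbhd: "\<forall>x\<in>U. \<exists>e>0. {x..<x+e} \<subseteq> U"
  show "openin sorgenfrey U"
  proof (subst openin_subopen, intro ballI)
    fix x assume "x \<in> U"
    then obtain e where "e > 0" "{x..<x+e} \<subseteq> U" using nbhd by blast
    moreover have "openin sorgenfrey {x..<x+e}"
      unfolding sorgenfrey_def using \<open>e > 0\<close> by (intro topology_generated_by_Basis) force
    ultimately show "\<exists>T. openin sorgenfrey T \<and> x \<in> T \<and> T \<subseteq> U"
      by (intro exI[of _ "{x..<x+e}"]) auto
  qed
qed

lemma openin_sorgenfrey_lessThan: "openin sorgenfrey {..<b}"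
  unfolding openin_sorgenfrey
proof
  fix x assume "x \<in> {..<b}"
  then show "\<exists>e>0. {x..<x+e} \<subseteq> {..<b}" by (intro exI[of _ "b - x"]) auto
qed

lemma openin_sorgenfrey_atLeast: "openin sorgenfrey {a..}"
  unfolding openin_sorgenfrey by (auto intro!: exI[of _ 1])

lemma topspace_sorgenfrey: "topspace sorgenfrey = UNIV"
proof -
  have "openin sorgenfrey UNIV" unfolding openin_sorgenfrey using zero_less_one by blast
  then show ?thesis using openin_subset by blast
qed

lemma compactin_directed_cover:
  assumes "compactin X S" "T \<noteq> {}" "\<And>t. t \<in> T \<Longrightarrow> openin X (U t)"
    and "S \<subseteq> (\<Union>t\<in>T. U t)"
    and "\<And>a b. a \<in> T \<Longrightarrow> b \<in> T \<Longrightarrow> \<exists>c\<in>T. U a \<union> U b \<subseteq> U c"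
  shows "\<exists>t\<in>T. S \<subseteq> U t"
proof -
  have "\<forall>V\<in>U ` T. openin X V" using assms(3) by blast
  then obtain \<F> where "finite \<F>" "\<F> \<subseteq> U ` T" "S \<subseteq> \<Union>\<F>"
    using assms(1,4) unfolding compactin_def by meson
  then obtain G where G: "G \<subseteq> T" "finite G" "S \<subseteq> \<Union>(U ` G)"
    using finite_subset_image by metis
  have "\<exists>c\<in>T. \<Union>(U ` G) \<subseteq> U c" using G(2,1)
  proof (induction G rule: finite_induct)
    case empty
    then show ?case using assms(2) by auto
  next
    case (insert g G)
    then obtain c where "c \<in> T" "\<Union>(U ` G) \<subseteq> U c" by auto
    moreover obtain d where "d \<in> T" "U g \<union> U c \<subseteq> U d"
      using assms(5)[of g c] insert.prems \<open>c \<in> T\<close> by auto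
    ultimately show ?case by auto
  qed
  with G(3) show ?thesis by blast
qed

lemma compactin_sorgenfrey_bounded:
  assumes "compactin sorgenfrey Q"
  shows "bounded Q"
proof -
  have "\<exists>n\<in>UNIV. Q \<subseteq> {-real n..<real n}"
  proof (rule compactin_directed_cover[OF assms])
    show "openin sorgenfrey {-real n..<real n}" for n
      using openin_Int[OF openin_sorgenfrey_atLeast openin_sorgenfrey_lessThan]
      by (simp add: atLeastLessThan_def)
    show "Q \<subseteq> (\<Union>n. {-real n..<real n})"
    proof
      fix x
      obtain n :: nat where "\<bar>x\<bar> < real n" using reals_Archimedean2 by blast
      then show "x \<in> (\<Union>n. {-real n..<real n})" by (intro UN_I[of n]) auto
    qed
    show "\<exists>c\<in>UNIV. {-real a..<real a} \<union> {-real b..<real b} \<subseteq> {-real c..<real c}" for a b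
      by (intro bexI[of _ "max a b"]) auto
  qed simp
  then show ?thesis using bounded_Ico bounded_subset by blast
qed

lemma compactin_sorgenfrey_left_gap:
  assumes "compactin sorgenfrey Q"
  shows "\<exists>t<s. Q \<inter> {t..<s} = {}"
proof -
  have "\<exists>t\<in>{..<s}. Q \<subseteq> {..<t} \<union> {s..}"
  proof (rule compactin_directed_cover[OF assms])
    show "{..<s} \<noteq> {}" using lt_ex[of s] by auto
    show "openin sorgenfrey ({..<t} \<union> {s..})" for t
      by (intro openin_Un openin_sorgenfrey_lessThan openin_sorgenfrey_atLeast)
    show "Q \<subseteq> (\<Union>t\<in>{..<s}. {..<t} \<union> {s..})"
    proof
      fix q
      show "q \<in> (\<Union>t\<in>{..<s}. {..<t} \<union> {s..})"
      proof (cases "q < s")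
        case True
        then show ?thesis by (intro UN_I[of "(q + s) / 2"]) auto
      next
        case False
        then show ?thesis by (intro UN_I[of "s - 1"]) auto
      qed
    qed
    show "\<exists>c\<in>{..<s}. {..<a} \<union> {s..} \<union> ({..<b} \<union> {s..}) \<subseteq> {..<c} \<union> {s..}"
      if "a \<in> {..<s}" "b \<in> {..<s}" for a b
      using that by (intro bexI[of _ "max a b"]) auto
  qed
  then obtain t where "t < s" "Q \<subseteq> {..<t} \<union> {s..}" by blast
  then have "Q \<inter> {t..<s} = {}" by auto
  with \<open>t < s\<close> show ?thesis by blast
qed

lemma compactin_sorgenfrey_right_gap:
  assumes "compactin sorgenfrey Q" "s \<notin> Q"
  shows "\<exists>t>s. Q \<inter> {s..<t} = {}"
proof -
  have "\<exists>t\<in>{s<..}. Q \<subseteq> {..<s} \<union> {t..}"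
  proof (rule compactin_directed_cover[OF assms(1)])
    show "{s<..} \<noteq> {}" using gt_ex[of s] by auto
    show "openin sorgenfrey ({..<s} \<union> {t..})" for t
      by (intro openin_Un openin_sorgenfrey_lessThan openin_sorgenfrey_atLeast)
    show "Q \<subseteq> (\<Union>t\<in>{s<..}. {..<s} \<union> {t..})"
    proof
      fix q assume "q \<in> Q"
      show "q \<in> (\<Union>t\<in>{s<..}. {..<s} \<union> {t..})"
      proof (cases "q < s")
        case True
        then show ?thesis by (intro UN_I[of "s + 1"]) auto
      next
        case False
        moreover have "q \<noteq> s" using assms(2) \<open>q \<in> Q\<close> by blast
        ultimately have "s < q" by linarith
        then show ?thesis by (intro UN_I[of q]) auto
      qed
    qed
    show "\<exists>c\<in>{s<..}. {..<s} \<union> {a..} \<union> ({..<s} \<union> {b..}) \<subseteq> {..<s} \<union> {c..}"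
      if "a \<in> {s<..}" "b \<in> {s<..}" for a b
      using that by (intro bexI[of _ "min a b"]) auto
  qed
  then obtain t where "t > s" "Q \<subseteq> {..<s} \<union> {t..}" by blast
  then have "Q \<inter> {s..<t} = {}" by auto
  with \<open>t > s\<close> show ?thesis by blast
qed

lemma countable_if_left_gaps:
  fixes Q :: "real set"
  assumes "\<And>q. q \<in> Q \<Longrightarrow> \<exists>p<q. Q \<inter> {p..<q} = {}"
  shows "countable Q"
proof -
  have "\<exists>r\<in>\<rat>. r < q \<and> Q \<inter> {r..<q} = {}" if q: "q \<in> Q" for q
  proof -
    obtain p where "p < q" "Q \<inter> {p..<q} = {}" using assms[OF q] by blast
    moreover obtain r where "r \<in> \<rat>" "p < r" "r < q" using Rats_dense_in_real[OF \<open>p < q\<close>] by blast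
    moreover have "Q \<inter> {r..<q} \<subseteq> Q \<inter> {p..<q}" using \<open>p < r\<close> by auto
    ultimately show ?thesis by blast
  qed
  then obtain g where g: "\<And>q. q \<in> Q \<Longrightarrow> g q \<in> \<rat> \<and> g q < q \<and> Q \<inter> {g q..<q} = {}"
    by metis
  have "inj_on g Q"
  proof (rule linorder_inj_onI')
    fix a b assume "a \<in> Q" "b \<in> Q" "a < b"
    then show "g a \<noteq> g b" using g[of a] g[of b] by auto
  qed
  moreover have "g ` Q \<subseteq> \<rat>" using g by auto
  ultimately show ?thesis
    by (metis countable_image_inj_on countable_rat countable_subset)
qed

lemma compactin_sorgenfrey_imp_ge_wellfounded:
  assumes "compactin sorgenfrey Q"
  shows "ge_wellfounded Q"
  unfolding ge_wellfounded_def
proof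
  assume "\<exists>r. (\<forall>n. r n \<in> Q) \<and> (\<forall>n. r n < r (Suc n))"
  then obtain r where rQ: "\<And>n. r n \<in> Q" and r_less: "\<And>n. r n < r (Suc n)" by blast
  have "bdd_above (range r)"
    using compactin_sorgenfrey_bounded[OF assms] rQ
    by (metis bounded_imp_bdd_above bounded_subset image_subsetI)
  define s where "s = Sup (range r)"
  obtain t where "t < s" "Q \<inter> {t..<s} = {}"
    using compactin_sorgenfrey_left_gap[OF assms] by blast
  then obtain n where "t < r n"
    using less_cSup_iff[OF _ \<open>bdd_above (range r)\<close>] s_def by auto
  moreover have "r n < s"
    using r_less[of n] cSup_upper[OF _ \<open>bdd_above (range r)\<close>, of "r (Suc n)"] s_def by auto
  ultimately show False using rQ[of n] \<open>Q \<inter> {t..<s} = {}\<close> by auto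
qed

lemma compactin_sorgenfrey_imp_ge_subdcpo:
  assumes "compactin sorgenfrey Q"
  shows "ge_subdcpo Q"
  unfolding ge_subdcpo_def
proof (intro allI impI conjI)
  fix D assume D: "D \<noteq> {} \<and> D \<subseteq> Q"
  then have "bounded D" using compactin_sorgenfrey_bounded[OF assms] bounded_subset by blast
  then show bdd: "bdd_below D" by (rule bounded_imp_bdd_below)
  show "Inf D \<in> Q"
  proof (rule ccontr)
    assume "Inf D \<notin> Q"
    then obtain t where "t > Inf D" "Q \<inter> {Inf D..<t} = {}"
      using compactin_sorgenfrey_right_gap[OF assms] by blast
    then have "t \<le> d" if "d \<in> D" for d
      using that D cInf_lower[OF that bdd] by fastforce
    then have "t \<le> Inf D" using D by (intro cInf_greatest) auto
    with \<open>t > Inf D\<close> show False by simp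
  qed
qed

lemma ge_wellfounded_iff_wf:
  "ge_wellfounded Q \<longleftrightarrow> wf {(y, x). x \<in> Q \<and> y \<in> Q \<and> x < y}"
  unfolding ge_wellfounded_def wf_iff_no_infinite_down_chain by auto

lemma ge_wellfounded_subdcpo_tail_finite_subcover:
  assumes wf: "ge_wellfounded Q" and dcpo: "ge_subdcpo Q"
    and \<U>: "\<forall>U\<in>\<U>. openin sorgenfrey U" "Q \<subseteq> \<Union>\<U>" and "q \<in> Q"
  shows "\<exists>\<F>. finite \<F> \<and> \<F> \<subseteq> \<U> \<and> Q \<inter> {q..} \<subseteq> \<Union>\<F>"
  using \<open>q \<in> Q\<close>
proof (induction q rule: wf_induct_rule[OF wf[unfolded ge_wellfounded_iff_wf]])
  case (1 q)
  then obtain U where "U \<in> \<U>" "q \<in> U" using \<U> by blast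
  then have "openin sorgenfrey U" using \<U> by blast
  with \<open>q \<in> U\<close> obtain e where "e > 0" and U: "{q..<q+e} \<subseteq> U"
    unfolding openin_sorgenfrey by blast
  show ?case
  proof (cases "Q \<inter> {q+e..} = {}")
    case True
    then have "Q \<inter> {q..} \<subseteq> \<Union>{U}" using U by force
    with \<open>U \<in> \<U>\<close> show ?thesis by blast
  next
    case False
    define R where "R = Q \<inter> {q+e..}"
    have "R \<noteq> {}" "R \<subseteq> Q" "Q \<inter> {q..} \<subseteq> {q..<q+e} \<union> R"
      using False unfolding R_def by auto
    then have "bdd_below R" "Inf R \<in> Q" using dcpo unfolding ge_subdcpo_def by auto
    have "q + e \<le> Inf R" using \<open>R \<noteq> {}\<close> unfolding R_def by (intro cInf_greatest) auto
    with \<open>e > 0\<close> \<open>q \<in> Q\<close> \<open>Inf R \<in> Q\<close>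
    have "(Inf R, q) \<in> {(y, x). x \<in> Q \<and> y \<in> Q \<and> x < y}" by simp
    from "1.IH"[OF this \<open>Inf R \<in> Q\<close>] obtain \<F>
      where \<F>: "finite \<F>" "\<F> \<subseteq> \<U>" "Q \<inter> {Inf R..} \<subseteq> \<Union>\<F>"
      by blast
    have "R \<subseteq> Q \<inter> {Inf R..}"
    proof
      fix x assume "x \<in> R"
      then show "x \<in> Q \<inter> {Inf R..}" using \<open>R \<subseteq> Q\<close> cInf_lower[OF _ \<open>bdd_below R\<close>] by auto
    qed
    with \<open>Q \<inter> {q..} \<subseteq> {q..<q+e} \<union> R\<close> U \<F>(3) have "Q \<inter> {q..} \<subseteq> \<Union>(insert U \<F>)"
      by blast
    with \<F> \<open>U \<in> \<U>\<close> show ?thesis by (intro exI[of _ "insert U \<F>"]) auto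
  qed
qed

lemma ge_wellfounded_subdcpo_imp_compactin:
  assumes wf: "ge_wellfounded Q" and dcpo: "ge_subdcpo Q"
  shows "compactin sorgenfrey Q"
  unfolding compactin_def topspace_sorgenfrey
proof (intro conjI allI impI)
  fix \<U> assume \<U>: "(\<forall>U\<in>\<U>. openin sorgenfrey U) \<and> Q \<subseteq> \<Union>\<U>"
  show "\<exists>\<F>. finite \<F> \<and> \<F> \<subseteq> \<U> \<and> Q \<subseteq> \<Union>\<F>"
  proof (cases "Q = {}")
    case False
    then have "bdd_below Q" "Inf Q \<in> Q" using dcpo unfolding ge_subdcpo_def by auto
    then have "Q \<subseteq> Q \<inter> {Inf Q..}" by (auto intro: cInf_lower)
    moreover obtain \<F> where "finite \<F>" "\<F> \<subseteq> \<U>" "Q \<inter> {Inf Q..} \<subseteq> \<Union>\<F>"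
      using ge_wellfounded_subdcpo_tail_finite_subcover[OF wf dcpo \<U>[THEN conjunct1]
          \<U>[THEN conjunct2] \<open>Inf Q \<in> Q\<close>] by blast
    ultimately show ?thesis by (intro exI[of _ \<F>]) auto
  qed auto
qed simp

theorem theorem4p15:
  fixes Q :: "real set"
  shows "(compactin sorgenfrey Q \<longleftrightarrow> ge_wellfounded Q \<and> ge_subdcpo Q)
         \<and> (compactin sorgenfrey Q \<longrightarrow> countable Q)"
proof (intro conjI impI)
  show "compactin sorgenfrey Q \<longleftrightarrow> ge_wellfounded Q \<and> ge_subdcpo Q"
    using compactin_sorgenfrey_imp_ge_wellfounded compactin_sorgenfrey_imp_ge_subdcpo
      ge_wellfounded_subdcpo_imp_compactin by blast
next
  assume "compactin sorgenfrey Q"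
  then show "countable Q" using countable_if_left_gaps compactin_sorgenfrey_left_gap by blast
qed

end
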